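(* Let $L$ be a language of coalgebraic predicate logic and $F$ an $L$-structure. Let $G$ be an $L^2$-structure that is an elementary extension of $(F,\mathscr P(F))$. Then there exist an $L$-structure $G'$ whose domain is the domain of the state sort of $G$ and a family $\mathcal S\subseteq\mathscr P(G')$ such that: (i) $\mathcal S$ contains all definable subsets of $G'$; (ii) $\mathcal S$ is large for $G'$; (iii) $G\cong(G',\mathcal S)$.
   Context: Given a first-order language $L_0$, the language $L$ of coalgebraic predicate logic based on $L_0$ is the least set of formulas containing the atomic $L_0$-formulas and closed under Boolean combinations, existential quantification, and formation of $x\,\Box_y\,\phi$ for $\phi\in L$ ($y$ bound). An $L$-structure is an $L_0$-structure $F$ with a neighborhood function $N^F: F\to\mathscr P(\mathscr P(F))$; satisfaction is as in first-order logic with $F\models w\,\Box_y\,\phi(y)$ iff $\{v\in F: F\models\phi(v)\}\in N^F(w)$. A subset of $F$ is definable if it is of the form $\{v: F\models\phi(v;\bar a)\}$ for an $L$-formula $\phi$ and parameters $\bar a\in F$. $L^2$ is the two-sorted first-order language with a state sort and a neighborhood sort, whose atomic formulas are those of $L_0$ (with all terms of state sort) together with $xNU$ and $x\in U$ ($x$ of state sort, $U$ of neighborhood sort). For an $L$-structure $F$ and a family $\mathcal S\subseteq\mathscr P(F)$ containing all definable subsets of $F$, $(F,\mathcal S)$ is the $L^2$-structure with state sort $F$ (interpreting $L_0$ as $F$ does), neighborhood sort $\mathcal S$, $wNU$ iff $U\in N^F(w)$, and $w\in U$ interpreted as membership. $\mathcal S$ is large for $F$ if $U\in\mathcal S$ whenever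 $U\in N^F(w)$ for some $w\in F$. *)

theory Defs
  imports Main
begin

text \<open>A first-order language L0 (with equality) is given by function symbols of
type 'f with arities fa and relation symbols of type 'r with arities ra.
Variables are natural numbers.\<close>

datatype 'f trm = Var nat | Fn 'f "'f trm list"

fun wf_trm :: "('f \<Rightarrow> nat) \<Rightarrow> 'f trm \<Rightarrow> bool" where
  "wf_trm fa (Var n) = True"
| "wf_trm fa (Fn f ts) = (length ts = fa f \<and> (\<forall>t\<in>set ts. wf_trm fa t))"

fun eval :: "('f \<Rightarrow> 'a list \<Rightarrow> 'a) \<Rightarrow> (nat \<Rightarrow> 'a) \<Rightarrow> 'f trm \<Rightarrow> 'a" where
  "eval I \<sigma> (Var n) = \<sigma> n"
| "eval I \<sigma> (Fn f ts) = I f (map (eval I \<sigma>) ts)"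

datatype ('f, 'r) cfm =
    CRel 'r "'f trm list"
  | CEq "'f trm" "'f trm"
  | CNeg "('f, 'r) cfm"
  | CAnd "('f, 'r) cfm" "('f, 'r) cfm"
  | CEx nat "('f, 'r) cfm"
  | CBox nat nat "('f, 'r) cfm"  \<comment> \<open>CBox x y phi is x Box_y phi, y bound\<close>

fun wf_cfm :: "('f \<Rightarrow> nat) \<Rightarrow> ('r \<Rightarrow> nat) \<Rightarrow> ('f, 'r) cfm \<Rightarrow> bool" where
  "wf_cfm fa ra (CRel r ts) = (length ts = ra r \<and> (\<forall>t\<in>set ts. wf_trm fa t))"
| "wf_cfm fa ra (CEq s t) = (wf_trm fa s \<and> wf_trm fa t)"
| "wf_cfm fa ra (CNeg p) = wf_cfm fa ra p"
| "wf_cfm fa ra (CAnd p q) = (wf_cfm fa ra p \<and> wf_cfm fa ra q)"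
| "wf_cfm fa ra (CEx x p) = wf_cfm fa ra p"
| "wf_cfm fa ra (CBox x y p) = wf_cfm fa ra p"

record ('a, 'f, 'r) lstr =
  cdom :: "'a set"
  fint :: "'f \<Rightarrow> 'a list \<Rightarrow> 'a"
  rint :: "'r \<Rightarrow> 'a list \<Rightarrow> bool"
  nbh  :: "'a \<Rightarrow> 'a set set"

definition is_lstr :: "('f \<Rightarrow> nat) \<Rightarrow> ('a, 'f, 'r) lstr \<Rightarrow> bool" where
  "is_lstr fa F \<longleftrightarrow> cdom F \<noteq> {}
     \<and> (\<forall>f as. set as \<subseteq> cdom F \<and> length as = fa f \<longrightarrow> fint F f as \<in> cdom F)
     \<and> (\<forall>w\<in>cdom F. nbh F w \<subseteq> Pow (cdom F))"

fun csat :: "('a, 'f, 'r) lstr \<Rightarrow> (nat \<Rightarrow> 'a) \<Rightarrow> ('f, 'r) cfm \<Rightarrow> bool" where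
  "csat F \<sigma> (CRel r ts) = rint F r (map (eval (fint F) \<sigma>) ts)"
| "csat F \<sigma> (CEq s t) = (eval (fint F) \<sigma> s = eval (fint F) \<sigma> t)"
| "csat F \<sigma> (CNeg p) = (\<not> csat F \<sigma> p)"
| "csat F \<sigma> (CAnd p q) = (csat F \<sigma> p \<and> csat F \<sigma> q)"
| "csat F \<sigma> (CEx x p) = (\<exists>v\<in>cdom F. csat F (\<sigma>(x := v)) p)"
| "csat F \<sigma> (CBox x y p) = ({v\<in>cdom F. csat F (\<sigma>(y := v)) p} \<in> nbh F (\<sigma> x))"

text \<open>Definable subsets (with parameters, given by the assignment of the free variables).\<close>

definition definable :: "('f \<Rightarrow> nat) \<Rightarrow> ('r \<Rightarrow> nat) \<Rightarrow> ('a, 'f, 'r) lstr \<Rightarrow> 'a set \<Rightarrow> bool" where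
  "definable fa ra F X \<longleftrightarrow> (\<exists>\<phi> y \<sigma>. wf_cfm fa ra \<phi> \<and> range \<sigma> \<subseteq> cdom F
      \<and> X = {v \<in> cdom F. csat F (\<sigma>(y := v)) \<phi>})"

definition contains_definable :: "('f \<Rightarrow> nat) \<Rightarrow> ('r \<Rightarrow> nat) \<Rightarrow> ('a, 'f, 'r) lstr \<Rightarrow> 'a set set \<Rightarrow> bool" where
  "contains_definable fa ra F S \<longleftrightarrow> (\<forall>X. definable fa ra F X \<longrightarrow> X \<in> S)"

definition large :: "('a, 'f, 'r) lstr \<Rightarrow> 'a set set \<Rightarrow> bool" where
  "large F S \<longleftrightarrow> (\<forall>w\<in>cdom F. \<forall>U\<in>nbh F w. U \<in> S)"

text \<open>State variables and neighbourhood variables are separate (both indexed by nat).\<close>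

datatype ('f, 'r) tfm =
    TRel 'r "'f trm list"
  | TEq "'f trm" "'f trm"
  | TEqN nat nat
  | TN nat nat
  | TIn nat nat
  | TNeg "('f, 'r) tfm"
  | TAnd "('f, 'r) tfm" "('f, 'r) tfm"
  | TExS nat "('f, 'r) tfm"
  | TExN nat "('f, 'r) tfm"

fun wf_tfm :: "('f \<Rightarrow> nat) \<Rightarrow> ('r \<Rightarrow> nat) \<Rightarrow> ('f, 'r) tfm \<Rightarrow> bool" where
  "wf_tfm fa ra (TRel r ts) = (length ts = ra r \<and> (\<forall>t\<in>set ts. wf_trm fa t))"
| "wf_tfm fa ra (TEq s t) = (wf_trm fa s \<and> wf_trm fa t)"
| "wf_tfm fa ra (TEqN U V) = True"
| "wf_tfm fa ra (TN x U) = True"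
| "wf_tfm fa ra (TIn x U) = True"
| "wf_tfm fa ra (TNeg p) = wf_tfm fa ra p"
| "wf_tfm fa ra (TAnd p q) = (wf_tfm fa ra p \<and> wf_tfm fa ra q)"
| "wf_tfm fa ra (TExS x p) = wf_tfm fa ra p"
| "wf_tfm fa ra (TExN U p) = wf_tfm fa ra p"

record ('a, 'n, 'f, 'r) tstr =
  sdom :: "'a set"
  ndom :: "'n set"
  sfun :: "'f \<Rightarrow> 'a list \<Rightarrow> 'a"
  srel :: "'r \<Rightarrow> 'a list \<Rightarrow> bool"
  nrel :: "'a \<Rightarrow> 'n \<Rightarrow> bool"
  mrel :: "'a \<Rightarrow> 'n \<Rightarrow> bool"

definition is_tstr :: "('f \<Rightarrow> nat) \<Rightarrow> ('a, 'n, 'f, 'r) tstr \<Rightarrow> bool" where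
  "is_tstr fa G \<longleftrightarrow> sdom G \<noteq> {} \<and> ndom G \<noteq> {}
     \<and> (\<forall>f as. set as \<subseteq> sdom G \<and> length as = fa f \<longrightarrow> sfun G f as \<in> sdom G)"

fun tsat :: "('a, 'n, 'f, 'r) tstr \<Rightarrow> (nat \<Rightarrow> 'a) \<Rightarrow> (nat \<Rightarrow> 'n) \<Rightarrow> ('f, 'r) tfm \<Rightarrow> bool" where
  "tsat G \<sigma> \<tau> (TRel r ts) = srel G r (map (eval (sfun G) \<sigma>) ts)"
| "tsat G \<sigma> \<tau> (TEq s t) = (eval (sfun G) \<sigma> s = eval (sfun G) \<sigma> t)"
| "tsat G \<sigma> \<tau> (TEqN U V) = (\<tau> U = \<tau> V)"
| "tsat G \<sigma> \<tau> (TN x U) = nrel G (\<sigma> x) (\<tau> U)"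
| "tsat G \<sigma> \<tau> (TIn x U) = mrel G (\<sigma> x) (\<tau> U)"
| "tsat G \<sigma> \<tau> (TNeg p) = (\<not> tsat G \<sigma> \<tau> p)"
| "tsat G \<sigma> \<tau> (TAnd p q) = (tsat G \<sigma> \<tau> p \<and> tsat G \<sigma> \<tau> q)"
| "tsat G \<sigma> \<tau> (TExS x p) = (\<exists>v\<in>sdom G. tsat G (\<sigma>(x := v)) \<tau> p)"
| "tsat G \<sigma> \<tau> (TExN U p) = (\<exists>V\<in>ndom G. tsat G \<sigma> (\<tau>(U := V)) p)"

definition pair_str :: "('a, 'f, 'r) lstr \<Rightarrow> 'a set set \<Rightarrow> ('a, 'a set, 'f, 'r) tstr" where
  "pair_str F S = \<lparr> sdom = cdom F, ndom = S, sfun = fint F, srel = rint F,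
                    nrel = (\<lambda>w U. U \<in> nbh F w), mrel = (\<lambda>w U. w \<in> U) \<rparr>"

text \<open>G is an elementary extension of H (up to identification of H with its image):
there is an elementary embedding of H into G.\<close>

definition elementary_extension ::
  "('f \<Rightarrow> nat) \<Rightarrow> ('r \<Rightarrow> nat) \<Rightarrow> ('a, 'm, 'f, 'r) tstr \<Rightarrow> ('b, 'n, 'f, 'r) tstr \<Rightarrow> bool" where
  "elementary_extension fa ra H G \<longleftrightarrow> (\<exists>hs hn.
      hs ` sdom H \<subseteq> sdom G \<and> hn ` ndom H \<subseteq> ndom G
      \<and> inj_on hs (sdom H) \<and> inj_on hn (ndom H)
      \<and> (\<forall>\<phi> \<sigma> \<tau>. wf_tfm fa ra \<phi> \<and> range \<sigma> \<subseteq> sdom H \<and> range \<tau> \<subseteq> ndom H \<longrightarrow>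
            (tsat H \<sigma> \<tau> \<phi> \<longleftrightarrow> tsat G (hs \<circ> \<sigma>) (hn \<circ> \<tau>) \<phi>)))"

definition tiso ::
  "('f \<Rightarrow> nat) \<Rightarrow> ('r \<Rightarrow> nat) \<Rightarrow> ('a, 'm, 'f, 'r) tstr \<Rightarrow> ('b, 'n, 'f, 'r) tstr \<Rightarrow> bool" where
  "tiso fa ra G H \<longleftrightarrow> (\<exists>hs hn.
      bij_betw hs (sdom G) (sdom H) \<and> bij_betw hn (ndom G) (ndom H)
      \<and> (\<forall>f as. set as \<subseteq> sdom G \<and> length as = fa f \<longrightarrow> hs (sfun G f as) = sfun H f (map hs as))
      \<and> (\<forall>r as. set as \<subseteq> sdom G \<and> length as = ra r \<longrightarrow> (srel G r as \<longleftrightarrow> srel H r (map hs as)))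
      \<and> (\<forall>w\<in>sdom G. \<forall>U\<in>ndom G. (nrel G w U \<longleftrightarrow> nrel H (hs w) (hn U))
                                 \<and> (mrel G w U \<longleftrightarrow> mrel H (hs w) (hn U))))"

end

theory Submission
  imports Defs
begin

text \<open>The L2-structure G is determined up to isomorphism by its state part together with the
  map sending a neighbourhood element V to its extension, the set of states that are in V.
  Extensionality (two neighbourhood elements with the same members are equal) and
  comprehension for every translated L-formula are first-order sentences of L2 that hold in
  (F, P(F)), so they hold in G. Extensionality makes the extension map injective, and
  comprehension puts every definable set of the induced L-structure G' into its image S,
  the neighbourhoods of G' lie in S by construction, and G is isomorphic to (G', S).\<close>

fun fvt :: "'f trm \<Rightarrow> nat set" where
  "fvt (Var n) = {n}"
| "fvt (Fn f ts) = (\<Union>t\<in>set ts. fvt t)"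

lemma finite_fvt: "finite (fvt t)"
  by (induction t) auto

lemma eval_cong: "\<forall>z\<in>fvt t. \<sigma> z = \<sigma>' z \<Longrightarrow> eval I \<sigma> t = eval I \<sigma>' t"
proof (induction t)
  case (Fn f ts)
  then have "\<forall>t\<in>set ts. eval I \<sigma> t = eval I \<sigma>' t" by auto
  then show ?case by (simp cong: map_cong)
qed simp

fun fvS :: "('f, 'r) tfm \<Rightarrow> nat set" where
  "fvS (TRel r ts) = (\<Union>t\<in>set ts. fvt t)"
| "fvS (TEq s t) = fvt s \<union> fvt t"
| "fvS (TEqN U V) = {}"
| "fvS (TN x U) = {x}"
| "fvS (TIn x U) = {x}"
| "fvS (TNeg p) = fvS p"
| "fvS (TAnd p q) = fvS p \<union> fvS q"
| "fvS (TExS x p) = fvS p - {x}"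
| "fvS (TExN U p) = fvS p"

lemma finite_fvS: "finite (fvS p)"
  by (induction p) (auto simp: finite_fvt)

lemma tsat_cong:
  "\<forall>z\<in>fvS p. \<sigma> z = \<sigma>' z \<Longrightarrow> tsat G \<sigma> \<tau> p = tsat G \<sigma>' \<tau> p"
proof (induction p arbitrary: \<sigma> \<sigma>' \<tau>)
  case (TRel r ts)
  then have "\<forall>t\<in>set ts. eval (sfun G) \<sigma> t = eval (sfun G) \<sigma>' t"
    by (auto intro!: eval_cong)
  then show ?case by (simp cong: map_cong)
next
  case (TEq s t)
  then show ?case using eval_cong[of s \<sigma> \<sigma>'] eval_cong[of t \<sigma> \<sigma>'] by auto
next
  case (TExS x p)
  have "tsat G (\<sigma>(x := v)) \<tau> p = tsat G (\<sigma>'(x := v)) \<tau> p" for v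
    using TExS.prems by (intro TExS.IH) auto
  then show ?case by simp
next
  case (TAnd p q)
  have "tsat G \<sigma> \<tau> p = tsat G \<sigma>' \<tau> p" "tsat G \<sigma> \<tau> q = tsat G \<sigma>' \<tau> q"
    using TAnd.prems by (intro TAnd.IH; auto)+
  then show ?case by simp
qed auto

definition TAllS :: "nat \<Rightarrow> ('f, 'r) tfm \<Rightarrow> ('f, 'r) tfm" where
  "TAllS x p = TNeg (TExS x (TNeg p))"

definition TAllN :: "nat \<Rightarrow> ('f, 'r) tfm \<Rightarrow> ('f, 'r) tfm" where
  "TAllN U p = TNeg (TExN U (TNeg p))"

definition TImp :: "('f, 'r) tfm \<Rightarrow> ('f, 'r) tfm \<Rightarrow> ('f, 'r) tfm" where
  "TImp p q = TNeg (TAnd p (TNeg q))"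

definition TIff :: "('f, 'r) tfm \<Rightarrow> ('f, 'r) tfm \<Rightarrow> ('f, 'r) tfm" where
  "TIff p q = TAnd (TImp p q) (TImp q p)"

lemma tsat_TAllS [simp]: "tsat G \<sigma> \<tau> (TAllS x p) = (\<forall>v\<in>sdom G. tsat G (\<sigma>(x := v)) \<tau> p)"
  by (simp add: TAllS_def)

lemma tsat_TAllN [simp]: "tsat G \<sigma> \<tau> (TAllN U p) = (\<forall>V\<in>ndom G. tsat G \<sigma> (\<tau>(U := V)) p)"
  by (simp add: TAllN_def)

lemma tsat_TImp [simp]: "tsat G \<sigma> \<tau> (TImp p q) = (tsat G \<sigma> \<tau> p \<longrightarrow> tsat G \<sigma> \<tau> q)"
  by (simp add: TImp_def)

lemma tsat_TIff [simp]: "tsat G \<sigma> \<tau> (TIff p q) = (tsat G \<sigma> \<tau> p \<longleftrightarrow> tsat G \<sigma> \<tau> q)"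
  by (auto simp add: TIff_def)

lemma wf_tfm_TAllS [simp]: "wf_tfm fa ra (TAllS x p) = wf_tfm fa ra p"
  by (simp add: TAllS_def)

lemma wf_tfm_TAllN [simp]: "wf_tfm fa ra (TAllN U p) = wf_tfm fa ra p"
  by (simp add: TAllN_def)

lemma wf_tfm_TImp [simp]: "wf_tfm fa ra (TImp p q) = (wf_tfm fa ra p \<and> wf_tfm fa ra q)"
  by (simp add: TImp_def)

lemma wf_tfm_TIff [simp]: "wf_tfm fa ra (TIff p q) = (wf_tfm fa ra p \<and> wf_tfm fa ra q)"
  by (auto simp add: TIff_def)

definition TAllS_list :: "nat list \<Rightarrow> ('f, 'r) tfm \<Rightarrow> ('f, 'r) tfm" where
  "TAllS_list xs p = foldr TAllS xs p"

lemma wf_tfm_TAllS_list [simp]: "wf_tfm fa ra (TAllS_list xs p) = wf_tfm fa ra p"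
  by (induction xs) (auto simp: TAllS_list_def)

lemma tsat_TAllS_list:
  assumes "range \<sigma> \<subseteq> sdom G"
  shows "tsat G \<sigma> \<tau> (TAllS_list xs p) \<longleftrightarrow>
    (\<forall>\<sigma>'. range \<sigma>' \<subseteq> sdom G \<longrightarrow> (\<forall>z. z \<notin> set xs \<longrightarrow> \<sigma>' z = \<sigma> z) \<longrightarrow> tsat G \<sigma>' \<tau> p)"
  using assms
proof (induction xs arbitrary: \<sigma>)
  case Nil
  have "(\<forall>z. \<sigma>' z = \<sigma> z) \<longleftrightarrow> \<sigma>' = \<sigma>" for \<sigma>' :: "nat \<Rightarrow> 'a"
    by auto
  with Nil show ?case by (simp add: TAllS_list_def)
next
  case (Cons x xs)
  have IH: "range (\<sigma>(x := v)) \<subseteq> sdom G" if "v \<in> sdom G" for v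
    using Cons.prems that by auto
  have unfold: "tsat G \<sigma> \<tau> (TAllS_list (x # xs) p) \<longleftrightarrow>
      (\<forall>v\<in>sdom G. tsat G (\<sigma>(x := v)) \<tau> (TAllS_list xs p))"
    by (simp add: TAllS_list_def)
  show ?case
  proof
    assume all: "tsat G \<sigma> \<tau> (TAllS_list (x # xs) p)"
    show "\<forall>\<sigma>'. range \<sigma>' \<subseteq> sdom G \<longrightarrow> (\<forall>z. z \<notin> set (x # xs) \<longrightarrow> \<sigma>' z = \<sigma> z) \<longrightarrow> tsat G \<sigma>' \<tau> p"
    proof (intro allI impI)
      fix \<sigma>' assume r: "range \<sigma>' \<subseteq> sdom G"
        and agree: "\<forall>z. z \<notin> set (x # xs) \<longrightarrow> \<sigma>' z = \<sigma> z"
      have v: "\<sigma>' x \<in> sdom G" using r by auto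
      then have "tsat G (\<sigma>(x := \<sigma>' x)) \<tau> (TAllS_list xs p)" using all unfold by blast
      then show "tsat G \<sigma>' \<tau> p"
        using Cons.IH[OF IH[OF v]] r agree by auto
    qed
  next
    assume all: "\<forall>\<sigma>'. range \<sigma>' \<subseteq> sdom G \<longrightarrow> (\<forall>z. z \<notin> set (x # xs) \<longrightarrow> \<sigma>' z = \<sigma> z) \<longrightarrow> tsat G \<sigma>' \<tau> p"
    have "tsat G (\<sigma>(x := v)) \<tau> (TAllS_list xs p)" if "v \<in> sdom G" for v
      unfolding Cons.IH[OF IH[OF that]] using all by auto
    then show "tsat G \<sigma> \<tau> (TAllS_list (x # xs) p)"
      using unfold by blast
  qed
qed

text \<open>Only the state variables are closed off universally: the neighbourhood variables keep
  the value of an arbitrary assignment into H, whose image in G serves as the witness.\<close>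

lemma elementary_extension_valid:
  assumes ee: "elementary_extension fa ra H G"
    and ne: "sdom H \<noteq> {}" "ndom H \<noteq> {}"
    and wf: "wf_tfm fa ra \<psi>"
    and valid: "\<And>\<sigma> \<tau>. range \<sigma> \<subseteq> sdom H \<Longrightarrow> range \<tau> \<subseteq> ndom H \<Longrightarrow> tsat H \<sigma> \<tau> \<psi>"
  shows "\<exists>\<tau>. \<forall>\<sigma>. range \<sigma> \<subseteq> sdom G \<longrightarrow> tsat G \<sigma> \<tau> \<psi>"
proof -
  obtain hs hn where hs: "hs ` sdom H \<subseteq> sdom G" and
    elem: "\<forall>\<phi> \<sigma> \<tau>. wf_tfm fa ra \<phi> \<and> range \<sigma> \<subseteq> sdom H \<and> range \<tau> \<subseteq> ndom H \<longrightarrow>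
            (tsat H \<sigma> \<tau> \<phi> \<longleftrightarrow> tsat G (hs \<circ> \<sigma>) (hn \<circ> \<tau>) \<phi>)"
    using ee unfolding elementary_extension_def by blast
  obtain a b where a: "a \<in> sdom H" and b: "b \<in> ndom H" using ne by blast
  obtain xs where xs: "set xs = fvS \<psi>" using finite_list[OF finite_fvS] by blast
  let ?\<sigma>H = "\<lambda>_::nat. a" and ?\<tau>H = "\<lambda>_::nat. b"
  have rH: "range ?\<sigma>H \<subseteq> sdom H" "range ?\<tau>H \<subseteq> ndom H" using a b by auto
  have "tsat H ?\<sigma>H ?\<tau>H (TAllS_list xs \<psi>)"
    unfolding tsat_TAllS_list[OF rH(1)] using valid rH(2) by blast
  then have "tsat G (hs \<circ> ?\<sigma>H) (hn \<circ> ?\<tau>H) (TAllS_list xs \<psi>)"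
    using elem wf rH by auto
  moreover have rG: "range (hs \<circ> ?\<sigma>H) \<subseteq> sdom G" using hs a by auto
  ultimately have closed: "\<forall>\<sigma>'. range \<sigma>' \<subseteq> sdom G \<longrightarrow> (\<forall>z. z \<notin> set xs \<longrightarrow> \<sigma>' z = hs a) \<longrightarrow>
      tsat G \<sigma>' (hn \<circ> ?\<tau>H) \<psi>"
    using tsat_TAllS_list[OF rG] by simp
  have "tsat G \<sigma> (hn \<circ> ?\<tau>H) \<psi>" if "range \<sigma> \<subseteq> sdom G" for \<sigma>
  proof -
    let ?\<sigma>' = "\<lambda>z. if z \<in> set xs then \<sigma> z else hs a"
    have "range ?\<sigma>' \<subseteq> sdom G" using that hs a by auto
    then have "tsat G ?\<sigma>' (hn \<circ> ?\<tau>H) \<psi>" using closed by auto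
    then show ?thesis using tsat_cong[of \<psi> ?\<sigma>' \<sigma>] xs by auto
  qed
  then show ?thesis by blast
qed

text \<open>Reusing neighbourhood variable 0 for every box is harmless because translated
  formulas have no free neighbourhood variables.\<close>

fun tfm_of_cfm :: "('f, 'r) cfm \<Rightarrow> ('f, 'r) tfm" where
  "tfm_of_cfm (CRel r ts) = TRel r ts"
| "tfm_of_cfm (CEq s t) = TEq s t"
| "tfm_of_cfm (CNeg p) = TNeg (tfm_of_cfm p)"
| "tfm_of_cfm (CAnd p q) = TAnd (tfm_of_cfm p) (tfm_of_cfm q)"
| "tfm_of_cfm (CEx x p) = TExS x (tfm_of_cfm p)"
| "tfm_of_cfm (CBox x y p) = TExN 0 (TAnd (TN x 0) (TAllS y (TIff (TIn y 0) (tfm_of_cfm p))))"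

lemma wf_tfm_tfm_of_cfm: "wf_cfm fa ra p \<Longrightarrow> wf_tfm fa ra (tfm_of_cfm p)"
  by (induction p) auto

definition ext_of :: "('a, 'n, 'f, 'r) tstr \<Rightarrow> 'n \<Rightarrow> 'a set" where
  "ext_of G V = {v \<in> sdom G. mrel G v V}"

definition induced_lstr :: "('a, 'n, 'f, 'r) tstr \<Rightarrow> ('a, 'f, 'r) lstr" where
  "induced_lstr G = \<lparr> cdom = sdom G, fint = sfun G, rint = srel G,
     nbh = (\<lambda>w. {ext_of G V | V. V \<in> ndom G \<and> nrel G w V}) \<rparr>"

lemma tsat_tfm_of_cfm_iff_csat: "tsat G \<sigma> \<tau> (tfm_of_cfm p) \<longleftrightarrow> csat (induced_lstr G) \<sigma> p"
proof (induction p arbitrary: \<sigma> \<tau>)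
  case (CBox x y p)
  have "tsat G \<sigma> \<tau> (tfm_of_cfm (CBox x y p)) \<longleftrightarrow> (\<exists>V\<in>ndom G. nrel G (\<sigma> x) V \<and>
      (\<forall>v\<in>sdom G. mrel G v V \<longleftrightarrow> csat (induced_lstr G) (\<sigma>(y := v)) p))"
    by (simp only: tfm_of_cfm.simps tsat.simps tsat_TAllS tsat_TIff CBox.IH) (simp add: fun_upd_def)
  also have "\<dots> \<longleftrightarrow> (\<exists>V\<in>ndom G. nrel G (\<sigma> x) V \<and>
      ext_of G V = {v \<in> sdom G. csat (induced_lstr G) (\<sigma>(y := v)) p})"
    unfolding ext_of_def set_eq_iff by blast
  also have "\<dots> \<longleftrightarrow> csat (induced_lstr G) \<sigma> (CBox x y p)"
    by (auto simp: induced_lstr_def)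
  finally show ?case .
qed (auto simp: induced_lstr_def)

lemma is_lstr_induced_lstr: "is_tstr fa G \<Longrightarrow> is_lstr fa (induced_lstr G)"
  by (auto simp: is_lstr_def is_tstr_def induced_lstr_def ext_of_def)

lemma large_induced_lstr: "large (induced_lstr G) (ext_of G ` ndom G)"
  by (auto simp: large_def induced_lstr_def)

lemma tiso_pair_str_induced_lstr:
  assumes inj: "inj_on (ext_of G) (ndom G)"
  shows "tiso fa ra G (pair_str (induced_lstr G) (ext_of G ` ndom G))"
proof -
  let ?H = "pair_str (induced_lstr G) (ext_of G ` ndom G)"
  have "nrel G w U \<longleftrightarrow> nrel ?H w (ext_of G U)" if "U \<in> ndom G" for w U
    using inj that by (auto simp: pair_str_def induced_lstr_def inj_on_def)
  moreover have "mrel G w U \<longleftrightarrow> mrel ?H w (ext_of G U)" if "w \<in> sdom G" for w U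
    using that by (simp add: pair_str_def ext_of_def)
  moreover have "bij_betw id (sdom G) (sdom ?H)" "bij_betw (ext_of G) (ndom G) (ndom ?H)"
    using inj by (simp_all add: pair_str_def induced_lstr_def bij_betw_def)
  ultimately show ?thesis
    unfolding tiso_def by (intro exI[of _ id] exI[of _ "ext_of G"]) (simp add: pair_str_def induced_lstr_def)
qed

definition extensionality :: "('f, 'r) tfm" where
  "extensionality = TAllN 0 (TAllN 1 (TImp (TAllS 0 (TIff (TIn 0 0) (TIn 0 1))) (TEqN 0 1)))"

definition comprehension :: "nat \<Rightarrow> ('f, 'r) cfm \<Rightarrow> ('f, 'r) tfm" where
  "comprehension y p = TExN 0 (TAllS y (TIff (TIn y 0) (tfm_of_cfm p)))"

lemma inj_on_ext_of:
  assumes ee: "elementary_extension fa ra (pair_str F S) G"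
    and "cdom F \<noteq> {}" "S \<noteq> {}" "S \<subseteq> Pow (cdom F)" "sdom G \<noteq> {}"
  shows "inj_on (ext_of G) (ndom G)"
proof -
  have "\<exists>\<tau>. \<forall>\<sigma>. range \<sigma> \<subseteq> sdom G \<longrightarrow> tsat G \<sigma> \<tau> extensionality"
  proof (rule elementary_extension_valid[OF ee])
    show "sdom (pair_str F S) \<noteq> {}" "ndom (pair_str F S) \<noteq> {}"
      using assms(2,3) by (simp_all add: pair_str_def)
    show "tsat (pair_str F S) \<sigma> \<tau> extensionality" for \<sigma> \<tau>
      using assms(4) by (auto simp: extensionality_def pair_str_def)
  qed (simp add: extensionality_def)
  then obtain \<tau> where "\<forall>\<sigma>. range \<sigma> \<subseteq> sdom G \<longrightarrow> tsat G \<sigma> \<tau> extensionality" ..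
  moreover obtain c where "c \<in> sdom G" using assms(5) by blast
  ultimately have "tsat G (\<lambda>_. c) \<tau> extensionality" by auto
  then show ?thesis
    unfolding inj_on_def ext_of_def set_eq_iff by (simp add: extensionality_def) blast
qed

lemma elementary_extension_comprehension:
  assumes ee: "elementary_extension fa ra (pair_str F (Pow (cdom F))) G"
    and ne: "cdom F \<noteq> {}" and wf: "wf_cfm fa ra \<phi>"
  shows "\<exists>\<tau>. \<forall>\<sigma>. range \<sigma> \<subseteq> sdom G \<longrightarrow> tsat G \<sigma> \<tau> (comprehension y \<phi>)"
proof (rule elementary_extension_valid[OF ee])
  let ?H = "pair_str F (Pow (cdom F))"
  show "sdom ?H \<noteq> {}" "ndom ?H \<noteq> {}" using ne by (auto simp: pair_str_def)
  show "wf_tfm fa ra (comprehension y \<phi>)"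
    using wf_tfm_tfm_of_cfm[OF wf] by (simp add: comprehension_def)
  fix \<sigma> \<tau>
  show "tsat ?H \<sigma> \<tau> (comprehension y \<phi>)"
    unfolding comprehension_def tsat.simps tsat_TAllS tsat_TIff tsat_tfm_of_cfm_iff_csat
    by (rule bexI[of _ "{v \<in> cdom F. csat (induced_lstr ?H) (\<sigma>(y := v)) \<phi>}"])
      (auto simp: pair_str_def)
qed

lemma contains_definable_ext_of:
  assumes ee: "elementary_extension fa ra (pair_str F (Pow (cdom F))) G"
    and ne: "cdom F \<noteq> {}"
  shows "contains_definable fa ra (induced_lstr G) (ext_of G ` ndom G)"
  unfolding contains_definable_def definable_def
proof (intro allI impI, elim exE conjE)
  fix X \<phi> y \<sigma>
  assume wf: "wf_cfm fa ra \<phi>" and r: "range \<sigma> \<subseteq> cdom (induced_lstr G)"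
    and X: "X = {v \<in> cdom (induced_lstr G). csat (induced_lstr G) (\<sigma>(y := v)) \<phi>}"
  obtain \<tau> where "tsat G \<sigma> \<tau> (comprehension y \<phi>)"
    using elementary_extension_comprehension[OF ee ne wf, of y] r by (auto simp: induced_lstr_def)
  then show "X \<in> ext_of G ` ndom G"
    unfolding comprehension_def tsat.simps tsat_TAllS tsat_TIff tsat_tfm_of_cfm_iff_csat X
    by (auto simp: ext_of_def induced_lstr_def)
qed

theorem lemma3p16:
  fixes fa :: "'f \<Rightarrow> nat" and ra :: "'r \<Rightarrow> nat"
    and F :: "('a, 'f, 'r) lstr" and G :: "('b, 'n, 'f, 'r) tstr"
  assumes "is_lstr fa F"
    and "is_tstr fa G"
    and "elementary_extension fa ra (pair_str F (Pow (cdom F))) G"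
  shows "\<exists>(G' :: ('b, 'f, 'r) lstr) S. is_lstr fa G' \<and> cdom G' = sdom G \<and> S \<subseteq> Pow (cdom G')
           \<and> contains_definable fa ra G' S \<and> large G' S
           \<and> tiso fa ra G (pair_str G' S)"
proof -
  have ne: "cdom F \<noteq> {}" "sdom G \<noteq> {}"
    using assms(1,2) by (auto simp: is_lstr_def is_tstr_def)
  have "inj_on (ext_of G) (ndom G)"
    using inj_on_ext_of[OF assms(3)] ne by blast
  moreover have "ext_of G ` ndom G \<subseteq> Pow (cdom (induced_lstr G))"
    by (auto simp: induced_lstr_def ext_of_def)
  ultimately show ?thesis
    using is_lstr_induced_lstr[OF assms(2)] contains_definable_ext_of[OF assms(3) ne(1)]
      large_induced_lstr tiso_pair_str_induced_lstr
    by (intro exI[of _ "induced_lstr G"] exI[of _ "ext_of G ` ndom G"] conjI)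
      (simp_all add: induced_lstr_def)
qed

end
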